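(* Assume (C0), (C1), (C2). Then, as $k\to\infty$ over $\mathbb{N}_{odd}$, $$\|\Phi_k\|_{L^2(0,\infty)}=O(1),\qquad \|\Phi_k'\|_{L^2(0,\infty)}=O(k),\qquad \|\Phi_k'\|_{L^\infty(0,\infty)}=O(k^{3/2}).$$ In particular $|\Phi_k'(0)|=O(k^{3/2})$.
   Context: Let $\omega>0$; $\mathbb{N}_{odd}$ is the set of positive odd integers. (C0): $g\in L^\infty(\mathbb{R})$ even, $g\not\equiv0$, $h=\gamma\delta_0$ with $\gamma\in\mathbb{R}\setminus\{0\}$. For $k\in\mathbb{N}_{odd}$, $L_k=-\frac{d^2}{dx^2}-k^2\omega^2g$ on $L^2(\mathbb{R})$ with domain $H^2(\mathbb{R})$; $\sigma_D(L_k)$ is the spectrum of $L_k$ restricted to $\{\varphi\in H^2(\mathbb{R}):\varphi(0)=0\}$. (C1): for all $k\in\mathbb{N}_{odd}$, $0\notin\sigma_{ess}(L_k)\cup\sigma_D(L_k)$. Under (C0),(C1) fix for each $k\in\mathbb{N}_{odd}$ a function $\Phi_k\in H^2(0,\infty)$ with $L_k\Phi_k=0$ on $(0,\infty)$ and $\Phi_k(0)=1$. (C2): there exist $\rho,M>0$ with $|\Phi_k(x)|\le Me^{-\rho x}$ for $x\ge0$, $k\in\mathbb{N}_{odd}$. *)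

theory Defs
  imports "HOL-Analysis.Analysis"
begin

definition sq_int :: "real set \<Rightarrow> (real \<Rightarrow> complex) \<Rightarrow> bool" where
  "sq_int S f \<longleftrightarrow> set_borel_measurable lborel S f \<and>
     set_integrable lborel S (\<lambda>x. (norm (f x))^2)"

definition l2norm :: "real set \<Rightarrow> (real \<Rightarrow> complex) \<Rightarrow> real" where
  "l2norm S f = sqrt (LINT x:S|lborel. (norm (f x))^2)"

text \<open>Sobolev space H2 on an interval S (here UNIV, {..0} or {0..}):
  u is differentiable on S with derivative u1, u1 is locally absolutely continuous with
  a.e. derivative u2 (u1 y - u1 x = integral of u2 over [x,y]), and u, u1, u2 are in L2(S).\<close>
definition H2 :: "real set \<Rightarrow> (real \<Rightarrow> complex) \<Rightarrow> (real \<Rightarrow> complex) \<Rightarrow> (real \<Rightarrow> complex) \<Rightarrow> bool" where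
  "H2 S u u1 u2 \<longleftrightarrow>
     (\<forall>x\<in>S. (u has_vector_derivative u1 x) (at x within S)) \<and>
     (\<forall>x\<in>S. \<forall>y\<in>S. x \<le> y \<longrightarrow> (u2 has_integral (u1 y - u1 x)) {x..y}) \<and>
     sq_int S u \<and> sq_int S u1 \<and> sq_int S u2"

text \<open>Graph of L_k = -d^2/dx^2 - k^2 omega^2 g on L2(R) with domain H2(R): pairs (u, L_k u).\<close>
definition graph_L :: "(real \<Rightarrow> real) \<Rightarrow> real \<Rightarrow> nat \<Rightarrow> (real \<Rightarrow> complex) \<Rightarrow> (real \<Rightarrow> complex) \<Rightarrow> bool" where
  "graph_L g \<omega> k u w \<longleftrightarrow> (\<exists>u1 u2. H2 UNIV u u1 u2 \<and>
     (\<forall>x. w x = - u2 x - complex_of_real ((real k)^2 * \<omega>^2 * g x) * u x))"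

text \<open>Graph of the Dirichlet realisation of L_k (Dirichlet condition u(0)=0 decoupling the two
  half-lines): u in H2 on each closed half-line, u(0)=0, w = L_k u on each open half-line.\<close>
definition graph_LD :: "(real \<Rightarrow> real) \<Rightarrow> real \<Rightarrow> nat \<Rightarrow> (real \<Rightarrow> complex) \<Rightarrow> (real \<Rightarrow> complex) \<Rightarrow> bool" where
  "graph_LD g \<omega> k u w \<longleftrightarrow> u 0 = 0 \<and>
     (\<exists>a1 a2. H2 {..0} u a1 a2 \<and>
        (\<forall>x<0. w x = - a2 x - complex_of_real ((real k)^2 * \<omega>^2 * g x) * u x)) \<and>
     (\<exists>b1 b2. H2 {0..} u b1 b2 \<and>
        (\<forall>x>0. w x = - b2 x - complex_of_real ((real k)^2 * \<omega>^2 * g x) * u x))"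

definition zero_in_resolvent :: "((real \<Rightarrow> complex) \<Rightarrow> (real \<Rightarrow> complex) \<Rightarrow> bool) \<Rightarrow> bool" where
  "zero_in_resolvent G \<longleftrightarrow>
     (\<forall>f. sq_int UNIV f \<longrightarrow> (\<exists>u w. G u w \<and> (AE x in lborel. w x = f x))) \<and>
     (\<exists>C. \<forall>u w. G u w \<longrightarrow> l2norm UNIV u \<le> C * l2norm UNIV w)"

text \<open>0 lies in the essential spectrum of the (self-adjoint) operator with graph G:
  Weyl criterion, i.e. there is a singular Weyl sequence.\<close>
definition zero_in_ess :: "((real \<Rightarrow> complex) \<Rightarrow> (real \<Rightarrow> complex) \<Rightarrow> bool) \<Rightarrow> bool" where
  "zero_in_ess G \<longleftrightarrow> (\<exists>u w :: nat \<Rightarrow> real \<Rightarrow> complex.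
     (\<forall>n. G (u n) (w n) \<and> l2norm UNIV (u n) = 1) \<and>
     (\<forall>v. sq_int UNIV v \<longrightarrow> (\<lambda>n. LINT x|lborel. u n x * cnj (v x)) \<longlonglongrightarrow> 0) \<and>
     (\<lambda>n. l2norm UNIV (w n)) \<longlonglongrightarrow> 0)"

end

theory Submission
  imports Defs
begin

(*
  On the half-line Phi'' = -k^2 omega^2 g Phi, so (C2) gives ||Phi|| = O(1) and ||Phi''|| = O(k^2).
  Integrating (conj Phi Phi')' = |Phi'|^2 + conj Phi Phi'' from 0 up to points where Phi' tends to 0
  gives ||Phi'||^2 <= |Phi'(0)| + <|Phi|, |Phi''|>, and integrating (|Phi'|^2)' from x to infinity
  gives |Phi'(x)|^2 <= 2 <|Phi'|, |Phi''|>. Splitting both products by weighted AM-GM (weights k^2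
  and k) yields two inequalities coupling ||Phi'||^2 and |Phi'(0)|; together they give
  ||Phi'||^2 = O(k^2), and then |Phi'(x)|^2 = O(k^3) uniformly in x.
*)

lemma integrable_pair_lborel_dominated:
  fixes a b :: "real \<Rightarrow> complex" and f :: "real \<times> real \<Rightarrow> complex"
  assumes a: "integrable lborel a" and b: "integrable lborel b"
    and f: "f \<in> borel_measurable (lborel \<Otimes>\<^sub>M lborel)"
    and bound: "\<And>p. norm (f p) \<le> norm (a (fst p)) * norm (b (snd p))"
  shows "integrable (lborel \<Otimes>\<^sub>M lborel) f"
proof (rule Bochner_Integration.integrable_bound[OF _ f])
  have [measurable]: "a \<in> borel_measurable lborel" "b \<in> borel_measurable lborel"
    using a b by auto
  show "integrable (lborel \<Otimes>\<^sub>M lborel) (\<lambda>p. norm (a (fst p)) * norm (b (snd p)))"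
  proof (rule lborel_pair.Fubini_integrable)
    show "(\<lambda>p. norm (a (fst p)) * norm (b (snd p))) \<in> borel_measurable (lborel \<Otimes>\<^sub>M lborel)"
      by measurable
    show "integrable lborel (\<lambda>x. \<integral>y. norm (norm (a (fst (x, y))) * norm (b (snd (x, y)))) \<partial>lborel)"
      using a by (simp add: integrable_norm)
    show "AE x in lborel. integrable lborel (\<lambda>y. norm (a (fst (x, y))) * norm (b (snd (x, y))))"
      using b by (simp add: integrable_norm)
  qed
  show "AE p in lborel \<Otimes>\<^sub>M lborel. norm (f p) \<le> norm (norm (a (fst p)) * norm (b (snd p)))"
    using bound by simp
qed

definition integral_upto :: "(real \<Rightarrow> complex) \<Rightarrow> real \<Rightarrow> complex" where
  "integral_upto f t = (\<integral>s. indicator {..t} s *\<^sub>R f s \<partial>lborel)"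

lemma integral_upto_measurable [measurable]:
  assumes "f \<in> borel_measurable lborel"
  shows "integral_upto f \<in> borel_measurable lborel"
proof -
  have [measurable]: "f \<in> borel_measurable borel" using assms by simp
  have "integral_upto f = (\<lambda>t. \<integral>s. (if s \<le> t then f s else 0) \<partial>lborel)"
    unfolding integral_upto_def
    by (auto simp: fun_eq_iff indicator_def intro!: Bochner_Integration.integral_cong)
  also have "\<dots> \<in> borel_measurable lborel" by measurable
  finally show ?thesis .
qed

lemma norm_integral_upto_le:
  assumes "integrable lborel f"
  shows "norm (integral_upto f t) \<le> (\<integral>s. norm (f s) \<partial>lborel)"
proof -
  have "norm (integral_upto f t) \<le> (\<integral>s. norm (indicator {..t} s *\<^sub>R f s) \<partial>lborel)"
    unfolding integral_upto_def by (rule integral_norm_bound)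
  also have "\<dots> \<le> (\<integral>s. norm (f s) \<partial>lborel)"
    using assms by (intro integral_mono integrable_norm integrable_mult_indicator)
      (auto simp: indicator_def)
  finally show ?thesis .
qed

text \<open>
  Both terms are integrals over triangles in the plane; after swapping the variables in the first,
  the triangles {s < t} and {t <= s} tile the plane, leaving the product integral.
\<close>
lemma integral_cnj_integral_upto_product:
  fixes a b :: "real \<Rightarrow> complex"
  assumes a: "integrable lborel a" and b: "integrable lborel b"
  shows "(\<integral>t. cnj (a t) * integral_upto b t + cnj (integral_upto a t) * b t \<partial>lborel)
         = cnj (\<integral>s. a s \<partial>lborel) * (\<integral>t. b t \<partial>lborel)"
proof -
  have [measurable]: "a \<in> borel_measurable lborel" "b \<in> borel_measurable lborel"
    using a b by auto
  have ca: "integrable lborel (\<lambda>x. cnj (a x))" using a by simp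
  have [measurable]: "(\<lambda>x. cnj (a x)) \<in> borel_measurable lborel"
    using ca by (rule borel_measurable_integrable)
  define G1 where "G1 = (\<lambda>p::real\<times>real. if snd p < fst p then cnj (a (fst p)) * b (snd p) else 0)"
  define G2 where "G2 = (\<lambda>p::real\<times>real. if snd p \<le> fst p then cnj (a (snd p)) * b (fst p) else 0)"
  define H where "H = (\<lambda>p::real\<times>real. cnj (a (snd p)) * b (fst p))"
  have G1m [measurable]: "G1 \<in> borel_measurable (lborel \<Otimes>\<^sub>M lborel)"
    unfolding G1_def by measurable
  have G2m [measurable]: "G2 \<in> borel_measurable (lborel \<Otimes>\<^sub>M lborel)"
    unfolding G2_def by measurable
  have Hm [measurable]: "H \<in> borel_measurable (lborel \<Otimes>\<^sub>M lborel)"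
    unfolding H_def by measurable
  have "norm (G1 p) \<le> norm (cnj (a (fst p))) * norm (b (snd p))" for p
    by (simp add: G1_def norm_mult)
  then have G1i: "integrable (lborel \<Otimes>\<^sub>M lborel) G1"
    by (rule integrable_pair_lborel_dominated[OF ca b G1m])
  have "norm (G2 p) \<le> norm (b (fst p)) * norm (cnj (a (snd p)))" for p
    by (simp add: G2_def norm_mult)
  then have G2i: "integrable (lborel \<Otimes>\<^sub>M lborel) G2"
    by (rule integrable_pair_lborel_dominated[OF b ca G2m])
  have "norm (H p) \<le> norm (b (fst p)) * norm (cnj (a (snd p)))" for p
    by (simp add: H_def norm_mult)
  then have Hi: "integrable (lborel \<Otimes>\<^sub>M lborel) H"
    by (rule integrable_pair_lborel_dominated[OF b ca Hm])
  have G1_section: "(\<lambda>s. G1 (t,s)) = (\<lambda>s. cnj (a t) * (indicator {..<t} s *\<^sub>R b s))" for t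
    by (auto simp: G1_def indicator_def fun_eq_iff)
  have G2_section: "(\<lambda>s. G2 (t,s)) = (\<lambda>s. cnj (indicator {..t} s *\<^sub>R a s) * b t)" for t
    by (auto simp: G2_def indicator_def fun_eq_iff)
  have G1_integral: "cnj (a t) * integral_upto b t = (\<integral>s. G1 (t,s) \<partial>lborel)" for t
  proof -
    have "integral_upto b t = (\<integral>s. indicator {..<t} s *\<^sub>R b s \<partial>lborel)"
      unfolding integral_upto_def
      by (rule integral_cong_AE) (auto intro!: eventually_mono[OF AE_lborel_singleton[of t]]
          simp: indicator_def)
    then show ?thesis by (simp only: G1_section integral_mult_right_zero)
  qed
  have G2_integral: "cnj (integral_upto a t) * b t = (\<integral>s. G2 (t,s) \<partial>lborel)" for t
    unfolding integral_upto_def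
    by (simp only: G2_section integral_mult_left_zero Bochner_Integration.integral_cnj)
  have G1_section_integrable: "integrable lborel (\<lambda>s. G1 (t,s))" for t
    unfolding G1_section by (intro integrable_mult_right integrable_mult_indicator b) auto
  have G2_section_integrable: "integrable lborel (\<lambda>s. G2 (t,s))" for t
    unfolding G2_section using a by (intro integrable_mult_left) (auto intro!: integrable_mult_indicator)
  have "(\<integral>t. cnj (a t) * integral_upto b t + cnj (integral_upto a t) * b t \<partial>lborel)
      = (\<integral>t. (\<integral>s. G1 (t,s) + G2 (t,s) \<partial>lborel) \<partial>lborel)"
    by (simp only: G1_integral G2_integral
        Bochner_Integration.integral_add[OF G1_section_integrable G2_section_integrable])
  also have "\<dots> = integral\<^sup>L (lborel \<Otimes>\<^sub>M lborel) (\<lambda>p. G1 p + G2 p)"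
    using lborel_pair.integral_fst'[OF Bochner_Integration.integrable_add[OF G1i G2i]] by simp
  also have "\<dots> = integral\<^sup>L (lborel \<Otimes>\<^sub>M lborel) G1 + integral\<^sup>L (lborel \<Otimes>\<^sub>M lborel) G2"
    by (rule Bochner_Integration.integral_add[OF G1i G2i])
  also have "integral\<^sup>L (lborel \<Otimes>\<^sub>M lborel) G1 = (\<integral>(x,y). G1 (y,x) \<partial>(lborel \<Otimes>\<^sub>M lborel))"
    using lborel_pair.integral_product_swap[OF G1m] by simp
  also have "(\<integral>(x,y). G1 (y,x) \<partial>(lborel \<Otimes>\<^sub>M lborel)) + integral\<^sup>L (lborel \<Otimes>\<^sub>M lborel) G2
      = integral\<^sup>L (lborel \<Otimes>\<^sub>M lborel) (\<lambda>p. (case p of (x,y) \<Rightarrow> G1 (y,x)) + G2 p)"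
    by (rule Bochner_Integration.integral_add[OF lborel_pair.integrable_product_swap[OF G1i] G2i,
          symmetric])
  also have "(\<lambda>p. (case p of (x,y) \<Rightarrow> G1 (y,x)) + G2 p) = H"
    by (auto simp: fun_eq_iff G1_def G2_def H_def)
  also have "integral\<^sup>L (lborel \<Otimes>\<^sub>M lborel) H = (\<integral>t. (\<integral>s. H (t,s) \<partial>lborel) \<partial>lborel)"
    using lborel_pair.integral_fst'[OF Hi] by simp
  also have "\<dots> = cnj (\<integral>s. a s \<partial>lborel) * (\<integral>t. b t \<partial>lborel)"
    by (simp add: H_def)
  finally show ?thesis .
qed

lemma cnj_integral_upto: "cnj (integral_upto f t) = integral_upto (\<lambda>s. cnj (f s)) t"
  unfolding integral_upto_def by (simp flip: Bochner_Integration.integral_cnj)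

lemma integrable_mult_integral_upto:
  assumes f: "integrable lborel f" and g: "integrable lborel g"
  shows "integrable lborel (\<lambda>t. f t * integral_upto g t)"
proof (rule Bochner_Integration.integrable_bound)
  show "integrable lborel (\<lambda>t. norm (f t) * (\<integral>s. norm (g s) \<partial>lborel))"
    using f by (intro integrable_mult_left integrable_norm)
  have [measurable]: "f \<in> borel_measurable lborel" "g \<in> borel_measurable lborel"
    using f g by auto
  show "(\<lambda>t. f t * integral_upto g t) \<in> borel_measurable lborel"
    by measurable
  show "AE t in lborel. norm (f t * integral_upto g t) \<le> norm (norm (f t) * (\<integral>s. norm (g s) \<partial>lborel))"
    using norm_integral_upto_le[OF g]
    by (auto simp: norm_mult intro!: mult_left_mono order.trans[OF _ abs_ge_self])
qed

text \<open>
  Integration by parts for absolutely continuous u, v; the library versions need pointwise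
  derivatives everywhere, which an H2 derivative need not have.
\<close>
lemma cnj_product_rule_set_integral:
  fixes u v a b :: "real \<Rightarrow> complex"
  assumes xy: "x \<le> y"
    and a: "set_integrable lborel {x..y} a" and b: "set_integrable lborel {x..y} b"
    and u: "\<forall>t\<in>{x..y}. u t = u x + (LINT s:{x..t}|lborel. a s)"
    and v: "\<forall>t\<in>{x..y}. v t = v x + (LINT s:{x..t}|lborel. b s)"
  shows "set_integrable lborel {x..y} (\<lambda>t. cnj (a t) * v t + cnj (u t) * b t)"
    and "cnj (u y) * v y - cnj (u x) * v x
          = (LINT t:{x..y}|lborel. cnj (a t) * v t + cnj (u t) * b t)"
proof -
  define a' where "a' = (\<lambda>s. indicator {x..y} s *\<^sub>R a s)"
  define b' where "b' = (\<lambda>s. indicator {x..y} s *\<^sub>R b s)"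
  have ai: "integrable lborel a'" using a unfolding a'_def set_integrable_def .
  have bi: "integrable lborel b'" using b unfolding b'_def set_integrable_def .
  have ca: "integrable lborel (\<lambda>t. cnj (a' t))" using ai by simp
  have upto_a: "(LINT s:{x..t}|lborel. a s) = integral_upto a' t" if "t \<in> {x..y}" for t
    unfolding integral_upto_def a'_def set_lebesgue_integral_def
    by (rule Bochner_Integration.integral_cong) (use that in \<open>auto simp: indicator_def\<close>)
  have upto_b: "(LINT s:{x..t}|lborel. b s) = integral_upto b' t" if "t \<in> {x..y}" for t
    unfolding integral_upto_def b'_def set_lebesgue_integral_def
    by (rule Bochner_Integration.integral_cong) (use that in \<open>auto simp: indicator_def\<close>)
  have "integral_upto a' y = (\<integral>s. a' s \<partial>lborel)" "integral_upto b' y = (\<integral>s. b' s \<partial>lborel)"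
    unfolding integral_upto_def a'_def b'_def
    by (auto intro!: Bochner_Integration.integral_cong simp: indicator_def)
  then have uy: "u y = u x + (\<integral>s. a' s \<partial>lborel)" and vy: "v y = v x + (\<integral>s. b' s \<partial>lborel)"
    using u[rule_format, of y] v[rule_format, of y] upto_a[of y] upto_b[of y] xy by auto
  define c where "c = (\<lambda>t. cnj (a' t) * v x + cnj (u x) * b' t)"
  define d where "d = (\<lambda>t. cnj (a' t) * integral_upto b' t + cnj (integral_upto a' t) * b' t)"
  have split: "(\<lambda>t. indicator {x..y} t *\<^sub>R (cnj (a t) * v t + cnj (u t) * b t))
     = (\<lambda>t. c t + d t)"
  proof
    fix t show "indicator {x..y} t *\<^sub>R (cnj (a t) * v t + cnj (u t) * b t) = c t + d t"
    proof (cases "t \<in> {x..y}")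
      case True
      then have "a' t = a t" "b' t = b t" "u t = u x + integral_upto a' t"
        "v t = v x + integral_upto b' t"
        using u[rule_format, OF True] v[rule_format, OF True] upto_a[OF True] upto_b[OF True]
        by (auto simp: a'_def b'_def)
      then show ?thesis using True by (simp add: c_def d_def algebra_simps)
    qed (simp add: a'_def b'_def c_def d_def)
  qed
  have ci: "integrable lborel c"
    unfolding c_def using ca bi
    by (intro Bochner_Integration.integrable_add integrable_mult_left integrable_mult_right)
  have di: "integrable lborel d"
    unfolding d_def cnj_integral_upto
    by (intro Bochner_Integration.integrable_add integrable_mult_integral_upto ca bi
        ai[THEN integrable_cnj]) (subst mult.commute, intro integrable_mult_integral_upto bi ca)
  show "set_integrable lborel {x..y} (\<lambda>t. cnj (a t) * v t + cnj (u t) * b t)"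
    unfolding set_integrable_def split using ci di by (rule Bochner_Integration.integrable_add)
  have "(LINT t:{x..y}|lborel. cnj (a t) * v t + cnj (u t) * b t)
      = (\<integral>t. c t \<partial>lborel) + (\<integral>t. d t \<partial>lborel)"
    unfolding set_lebesgue_integral_def split by (rule Bochner_Integration.integral_add[OF ci di])
  also have "(\<integral>t. d t \<partial>lborel) = cnj (\<integral>s. a' s \<partial>lborel) * (\<integral>t. b' t \<partial>lborel)"
    unfolding d_def by (rule integral_cnj_integral_upto_product[OF ai bi])
  also have "(\<integral>t. c t \<partial>lborel) = cnj (\<integral>s. a' s \<partial>lborel) * v x + cnj (u x) * (\<integral>t. b' t \<partial>lborel)"
    unfolding c_def using ca bi by (subst Bochner_Integration.integral_add) auto
  finally show "cnj (u y) * v y - cnj (u x) * v x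
      = (LINT t:{x..y}|lborel. cnj (a t) * v t + cnj (u t) * b t)"
    unfolding uy vy by (simp add: algebra_simps)
qed

lemma set_integrable_Icc_of_square_integrable:
  fixes f :: "real \<Rightarrow> complex"
  assumes m: "set_borel_measurable lborel S f"
    and i: "set_integrable lborel S (\<lambda>x. (norm (f x))^2)"
    and S: "{x..y} \<subseteq> S"
  shows "set_integrable lborel {x..y} f"
proof (rule set_integrable_bound[where f = "\<lambda>t. 1 + (norm (f t))^2"])
  have "set_integrable lborel {x..y} (\<lambda>t. 1::real)"
    by (rule borel_integrable_atLeastAtMost') (rule continuous_on_const)
  moreover have "set_integrable lborel {x..y} (\<lambda>t. (norm (f t))^2)"
    by (rule set_integrable_subset[OF i _ S]) simp
  ultimately show "set_integrable lborel {x..y} (\<lambda>t. 1 + (norm (f t))^2)"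
    by (rule set_integral_add(1))
  show "set_borel_measurable lborel {x..y} f"
    by (rule set_borel_measurable_subset[OF m _ S]) simp
  have "r \<le> 1 + r^2" if "0 \<le> r" for r :: real
    using sum_squares_ge_zero[of "r - 1" 0] that by (simp add: power2_eq_square algebra_simps)
  then show "AE t in lborel. t \<in> {x..y} \<longrightarrow> norm (f t) \<le> norm (1 + (norm (f t))^2)"
    by simp
qed

lemma set_borel_measurable_norm_mult:
  fixes f g :: "real \<Rightarrow> complex"
  assumes "set_borel_measurable lborel A f" "set_borel_measurable lborel A g"
  shows "set_borel_measurable lborel A (\<lambda>x. norm (f x) * norm (g x))"
proof -
  have [measurable]: "(\<lambda>x. indicator A x *\<^sub>R f x) \<in> borel_measurable lborel"
     "(\<lambda>x. indicator A x *\<^sub>R g x) \<in> borel_measurable lborel"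
    using assms unfolding set_borel_measurable_def by auto
  have "(\<lambda>x. indicator A x *\<^sub>R (norm (f x) * norm (g x))) =
        (\<lambda>x. norm (indicator A x *\<^sub>R f x) * norm (indicator A x *\<^sub>R g x))"
    by (auto simp: fun_eq_iff indicator_def)
  also have "\<dots> \<in> borel_measurable lborel" by measurable
  finally show ?thesis unfolding set_borel_measurable_def .
qed

lemma set_integral_norm_mult_AM_GM:
  fixes f g :: "real \<Rightarrow> complex"
  assumes mf: "set_borel_measurable lborel A f" and mg: "set_borel_measurable lborel A g"
    and f: "set_integrable lborel A (\<lambda>x. (norm (f x))^2)"
    and g: "set_integrable lborel A (\<lambda>x. (norm (g x))^2)"
    and K: "K > 0"
  shows "set_integrable lborel A (\<lambda>x. norm (f x) * norm (g x))"
    and "2 * (LINT x:A|lborel. norm (f x) * norm (g x))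
          \<le> K * (LINT x:A|lborel. (norm (f x))^2) + (LINT x:A|lborel. (norm (g x))^2) / K"
proof -
  have pointwise: "2 * (norm (f x) * norm (g x)) \<le> K * (norm (f x))^2 + (norm (g x))^2 / K" for x
  proof -
    have "0 \<le> (K * norm (f x) - norm (g x))^2 / K" using K by simp
    then show ?thesis using K by (simp add: power2_eq_square field_simps)
  qed
  have bound_integrable: "set_integrable lborel A (\<lambda>x. K * (norm (f x))^2 + (norm (g x))^2 / K)"
    using f g by (intro set_integral_add(1)) auto
  have "norm (norm (f x) * norm (g x)) \<le> norm (K * (norm (f x))^2 + (norm (g x))^2 / K)" for x
    using pointwise[of x] mult_nonneg_nonneg[OF norm_ge_zero norm_ge_zero, of "f x" "g x"]
    by (simp add: abs_mult)
  then show integrable: "set_integrable lborel A (\<lambda>x. norm (f x) * norm (g x))"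
    by (intro set_integrable_bound[OF bound_integrable set_borel_measurable_norm_mult[OF mf mg]])
      simp
  have "(LINT x:A|lborel. 2 * (norm (f x) * norm (g x)))
      \<le> (LINT x:A|lborel. K * (norm (f x))^2 + (norm (g x))^2 / K)"
    by (rule set_integral_mono[OF _ bound_integrable])
      (use integrable pointwise in \<open>auto simp: set_integrable_mult_right\<close>)
  also have "\<dots> = K * (LINT x:A|lborel. (norm (f x))^2) + (LINT x:A|lborel. (norm (g x))^2) / K"
    using f g by (simp add: set_integral_add(2))
  finally show "2 * (LINT x:A|lborel. norm (f x) * norm (g x))
      \<le> K * (LINT x:A|lborel. (norm (f x))^2) + (LINT x:A|lborel. (norm (g x))^2) / K"
    by simp
qed

lemma set_integral_mono_set_nonneg:
  fixes h :: "real \<Rightarrow> real"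
  assumes i: "set_integrable lborel B h" and A: "A \<in> sets lborel" "A \<subseteq> B"
    and nonneg: "\<And>x. x \<in> B \<Longrightarrow> 0 \<le> h x"
  shows "(LINT x:A|lborel. h x) \<le> (LINT x:B|lborel. h x)"
  unfolding set_lebesgue_integral_def
  by (rule integral_mono[OF set_integrable_subset[OF i A, unfolded set_integrable_def]
        i[unfolded set_integrable_def]])
    (use A nonneg in \<open>auto simp: indicator_def\<close>)

text \<open>If |f| stayed above 1/(n+1) on all of [n, \<infinity>), f could not be square integrable.\<close>
lemma square_integrable_vanishing_sequence:
  fixes f :: "real \<Rightarrow> complex"
  assumes i: "set_integrable lborel {0..} (\<lambda>x. (norm (f x))^2)"
  obtains T :: "nat \<Rightarrow> real" where "\<And>n. real n \<le> T n" and "(\<lambda>n. f (T n)) \<longlonglongrightarrow> 0"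
proof -
  define I where "I = (LINT x:{0..}|lborel. (norm (f x))^2)"
  have "\<exists>t \<ge> real n. norm (f t) \<le> 1 / (real n + 1)" for n
  proof (rule ccontr)
    assume "\<not> ?thesis"
    then have big: "\<And>t. t \<ge> real n \<Longrightarrow> 1 / (real n + 1) < norm (f t)" by force
    define e where "e = (1 / (real n + 1))^2"
    have e: "e > 0" unfolding e_def by simp
    have "e * L \<le> I" if L: "L \<ge> 0" for L
    proof -
      have "e * L = (LINT x:{real n..real n + L}|lborel. e)"
        using L by (subst set_integral_const) (auto simp: mult.commute)
      also have "\<dots> \<le> (LINT x:{real n..real n + L}|lborel. (norm (f x))^2)"
      proof (rule set_integral_mono)
        show "set_integrable lborel {real n..real n + L} (\<lambda>x. e)"
          by (rule borel_integrable_atLeastAtMost') (rule continuous_on_const)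
        show "set_integrable lborel {real n..real n + L} (\<lambda>x. (norm (f x))^2)"
          by (rule set_integrable_subset[OF i]) auto
        fix x assume "x \<in> {real n..real n + L}"
        then show "e \<le> (norm (f x))^2"
          unfolding e_def using big[of x] by (intro power_mono) auto
      qed
      also have "\<dots> \<le> I"
        unfolding I_def by (rule set_integral_mono_set_nonneg[OF i]) auto
      finally show ?thesis .
    qed
    from this[of "(\<bar>I\<bar> + 1) / e"] show False using e by simp
  qed
  then obtain T where T: "\<And>n. real n \<le> T n" and small: "\<And>n. norm (f (T n)) \<le> 1 / (real n + 1)"
    by metis
  have "(\<lambda>n. 1 / (real n + 1)) \<longlonglongrightarrow> 0"
    using LIMSEQ_inverse_real_of_nat by (simp add: inverse_eq_divide add.commute)
  then have "(\<lambda>n. f (T n)) \<longlonglongrightarrow> 0"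
    by (rule Lim_null_comparison[rotated]) (use small in simp)
  with T show thesis by (rule that)
qed

lemma H2_halfline_integral_forms:
  fixes P D W :: "real \<Rightarrow> complex"
  assumes H: "H2 {0..} P D W" and x: "0 \<le> x"
  shows "set_integrable lborel {x..y} D" and "set_integrable lborel {x..y} W"
    and "\<forall>t\<in>{x..y}. P t = P x + (LINT s:{x..t}|lborel. D s)"
    and "\<forall>t\<in>{x..y}. D t = D x + (LINT s:{x..t}|lborel. W s)"
proof -
  have der: "\<And>t. t \<ge> 0 \<Longrightarrow> (P has_vector_derivative D t) (at t within {0..})"
    and ftc: "\<And>s t. 0 \<le> s \<Longrightarrow> s \<le> t \<Longrightarrow> (W has_integral (D t - D s)) {s..t}"
    and mD: "set_borel_measurable lborel {0..} D"
    and iD: "set_integrable lborel {0..} (\<lambda>x. (norm (D x))^2)"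
    and mW: "set_borel_measurable lborel {0..} W"
    and iW: "set_integrable lborel {0..} (\<lambda>x. (norm (W x))^2)"
    using H unfolding H2_def sq_int_def by auto
  have sub: "{x..t} \<subseteq> {0..}" for t using x by auto
  show iDxy: "set_integrable lborel {x..y} D" and "set_integrable lborel {x..y} W"
    using set_integrable_Icc_of_square_integrable[OF mD iD sub]
      set_integrable_Icc_of_square_integrable[OF mW iW sub] by auto
  have lint: "(LINT s:{x..t}|lborel. f s) = I"
    if "set_integrable lborel {x..t} f" "(f has_integral I) {x..t}" for f :: "real \<Rightarrow> complex" and I t
    using set_borel_integral_eq_integral(2)[OF that(1)] that(2) integral_unique by metis
  show "\<forall>t\<in>{x..y}. P t = P x + (LINT s:{x..t}|lborel. D s)"
  proof
    fix t assume t: "t \<in> {x..y}"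
    have "(D has_integral (P t - P x)) {x..t}"
      using t x by (intro fundamental_theorem_of_calculus)
        (auto intro: has_vector_derivative_within_subset[OF der])
    from lint[OF set_integrable_Icc_of_square_integrable[OF mD iD sub] this]
    show "P t = P x + (LINT s:{x..t}|lborel. D s)" by simp
  qed
  show "\<forall>t\<in>{x..y}. D t = D x + (LINT s:{x..t}|lborel. W s)"
  proof
    fix t assume t: "t \<in> {x..y}"
    have "(W has_integral (D t - D x)) {x..t}"
      using t x by (intro ftc) auto
    from lint[OF set_integrable_Icc_of_square_integrable[OF mW iW sub] this]
    show "D t = D x + (LINT s:{x..t}|lborel. W s)" by simp
  qed
qed

lemma cnj_mult_self: "cnj z * z = complex_of_real ((norm z)^2)"
  by (metis complex_norm_square mult.commute)

lemma set_integrable_complex_of_real_iff: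
  "set_integrable M A (\<lambda>x. complex_of_real (f x)) \<longleftrightarrow> set_integrable M A f"
proof -
  have "(\<lambda>x. indicator A x *\<^sub>R complex_of_real (f x)) = (\<lambda>x. complex_of_real (indicator A x *\<^sub>R f x))"
    by (auto simp: fun_eq_iff indicator_def)
  then show ?thesis
    unfolding set_integrable_def by (simp only: complex_of_real_integrable_eq)
qed

lemma set_integral_norm_sq_nonneg:
  fixes f :: "real \<Rightarrow> complex"
  shows "0 \<le> (LINT x:A|lborel. (norm (f x))^2)"
  unfolding set_lebesgue_integral_def by (rule integral_nonneg_AE) (auto simp: indicator_def)

lemma H2_halfline_energy_le_Icc:
  fixes P D W :: "real \<Rightarrow> complex"
  assumes H: "H2 {0..} P D W" and T: "0 \<le> T"
  shows "(LINT t:{0..T}|lborel. (norm (D t))^2)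
      \<le> norm (P T) * norm (D T) + norm (P 0) * norm (D 0) + (LINT t:{0..T}|lborel. norm (P t) * norm (W t))"
proof -
  have iD: "set_integrable lborel {0..} (\<lambda>x. (norm (D x))^2)"
    using H unfolding H2_def sq_int_def by auto
  note forms = H2_halfline_integral_forms[OF H order.refl, of T]
  note by_parts = cnj_product_rule_set_integral[OF T forms(1,2,3,4)]
  have iDD: "set_integrable lborel {0..T} (\<lambda>t. cnj (D t) * D t)"
    unfolding cnj_mult_self set_integrable_complex_of_real_iff
    by (rule set_integrable_subset[OF iD]) auto
  have iPW: "set_integrable lborel {0..T} (\<lambda>t. cnj (P t) * W t)"
    using set_integral_diff(1)[OF by_parts(1) iDD] by simp
  have "complex_of_real (LINT t:{0..T}|lborel. (norm (D t))^2) = (LINT t:{0..T}|lborel. cnj (D t) * D t)"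
    unfolding cnj_mult_self by (rule set_integral_complex_of_real[symmetric])
  also have "\<dots> = cnj (P T) * D T - cnj (P 0) * D 0 - (LINT t:{0..T}|lborel. cnj (P t) * W t)"
    using by_parts(2) set_integral_add(2)[OF iDD iPW] by (simp add: algebra_simps)
  finally have expansion: "complex_of_real (LINT t:{0..T}|lborel. (norm (D t))^2)
      = cnj (P T) * D T - cnj (P 0) * D 0 - (LINT t:{0..T}|lborel. cnj (P t) * W t)" .
  from set_integral_norm_sq_nonneg[of "{0..T}" D] have identity: "(LINT t:{0..T}|lborel. (norm (D t))^2)
      = norm (cnj (P T) * D T - cnj (P 0) * D 0 - (LINT t:{0..T}|lborel. cnj (P t) * W t))"
    unfolding expansion[symmetric] by simp
  have "norm (LINT t:{0..T}|lborel. cnj (P t) * W t) \<le> (LINT t:{0..T}|lborel. norm (P t) * norm (W t))"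
    using set_integral_norm_bound[OF iPW] by (simp add: norm_mult)
  moreover have "norm (cnj (P T) * D T) = norm (P T) * norm (D T)"
    and "norm (cnj (P 0) * D 0) = norm (P 0) * norm (D 0)"
    by (simp_all add: norm_mult)
  ultimately show ?thesis
    unfolding identity
    using norm_triangle_ineq4[of "cnj (P T) * D T - cnj (P 0) * D 0" "LINT t:{0..T}|lborel. cnj (P t) * W t"]
      norm_triangle_ineq4[of "cnj (P T) * D T" "cnj (P 0) * D 0"]
    by linarith
qed

lemma H2_halfline_energy_le:
  fixes P D W :: "real \<Rightarrow> complex"
  assumes H: "H2 {0..} P D W" and P_bounded: "\<And>x. 0 \<le> x \<Longrightarrow> norm (P x) \<le> Mb"
  shows "(LINT x:{0..}|lborel. (norm (D x))^2)
      \<le> norm (P 0) * norm (D 0) + (LINT x:{0..}|lborel. norm (P x) * norm (W x))"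
proof -
  have mP: "set_borel_measurable lborel {0..} P" and iP: "set_integrable lborel {0..} (\<lambda>x. (norm (P x))^2)"
    and mW: "set_borel_measurable lborel {0..} W" and iW: "set_integrable lborel {0..} (\<lambda>x. (norm (W x))^2)"
    and iD: "set_integrable lborel {0..} (\<lambda>x. (norm (D x))^2)"
    using H unfolding H2_def sq_int_def by auto
  define J where "J = (LINT x:{0..}|lborel. norm (P x) * norm (W x))"
  have iPW: "set_integrable lborel {0..} (\<lambda>x. norm (P x) * norm (W x))"
    using set_integral_norm_mult_AM_GM(1)[OF mP mW iP iW, of 1] by simp
  obtain T where T: "\<And>n. real n \<le> T n" and DT: "(\<lambda>n. D (T n)) \<longlonglongrightarrow> 0"
    using square_integrable_vanishing_sequence[OF iD] by blast
  have partial: "(LINT t:{0..T n}|lborel. (norm (D t))^2) \<le> Mb * norm (D (T n)) + norm (P 0) * norm (D 0) + J"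
    for n
  proof -
    have T0: "0 \<le> T n" using T[of n] by linarith
    have "norm (P (T n)) * norm (D (T n)) \<le> Mb * norm (D (T n))"
      using P_bounded[OF T0] by (intro mult_right_mono) auto
    moreover have "(LINT t:{0..T n}|lborel. norm (P t) * norm (W t)) \<le> J"
      unfolding J_def by (rule set_integral_mono_set_nonneg[OF iPW]) auto
    ultimately show ?thesis
      using H2_halfline_energy_le_Icc[OF H T0] by linarith
  qed
  have T_lim: "filterlim T at_top sequentially"
    by (rule filterlim_at_top_mono[OF filterlim_real_sequentially]) (use T in auto)
  have "(\<lambda>n. LINT t:{0..T n}|lborel. (norm (D t))^2) \<longlonglongrightarrow> (LINT x:{0..}|lborel. (norm (D x))^2)"
    by (rule filterlim_compose[OF tendsto_set_lebesgue_integral_at_top T_lim]) (use iD in auto)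
  moreover have "(\<lambda>n. Mb * norm (D (T n)) + norm (P 0) * norm (D 0) + J)
      \<longlonglongrightarrow> Mb * 0 + norm (P 0) * norm (D 0) + J"
    by (intro tendsto_intros tendsto_norm_zero DT)
  ultimately show ?thesis
    unfolding J_def[symmetric] by (intro LIMSEQ_le) (use partial in auto)
qed

lemma H2_halfline_derivative_sq_le_Icc:
  fixes P D W :: "real \<Rightarrow> complex"
  assumes H: "H2 {0..} P D W" and x: "0 \<le> x" and xT: "x \<le> T"
  shows "(norm (D x))^2 \<le> (norm (D T))^2 + 2 * (LINT t:{x..T}|lborel. norm (D t) * norm (W t))"
proof -
  have mD: "set_borel_measurable lborel {0..} D" and iD: "set_integrable lborel {0..} (\<lambda>x. (norm (D x))^2)"
    and mW: "set_borel_measurable lborel {0..} W" and iW: "set_integrable lborel {0..} (\<lambda>x. (norm (W x))^2)"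
    using H unfolding H2_def sq_int_def by auto
  have iDW: "set_integrable lborel {x..T} (\<lambda>t. norm (D t) * norm (W t))"
  proof (rule set_integrable_subset)
    show "set_integrable lborel {0..} (\<lambda>t. norm (D t) * norm (W t))"
      using set_integral_norm_mult_AM_GM(1)[OF mD mW iD iW, of 1] by simp
  qed (use x in auto)
  note forms = H2_halfline_integral_forms[OF H x, of T]
  note by_parts = cnj_product_rule_set_integral[OF xT forms(2,2,4,4)]
  have "norm (LINT t:{x..T}|lborel. cnj (W t) * D t + cnj (D t) * W t)
      \<le> (LINT t:{x..T}|lborel. 2 * (norm (D t) * norm (W t)))"
  proof (rule order.trans[OF set_integral_norm_bound[OF by_parts(1)]], rule set_integral_mono)
    show "set_integrable lborel {x..T} (\<lambda>t. norm (cnj (W t) * D t + cnj (D t) * W t))"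
      by (rule set_integrable_norm[OF by_parts(1)])
    show "set_integrable lborel {x..T} (\<lambda>t. 2 * (norm (D t) * norm (W t)))"
      by (rule set_integrable_mult_right[OF iDW])
    show "norm (cnj (W t) * D t + cnj (D t) * W t) \<le> 2 * (norm (D t) * norm (W t))" for t
      using norm_triangle_ineq[of "cnj (W t) * D t" "cnj (D t) * W t"] by (simp add: norm_mult)
  qed
  then have "norm (complex_of_real ((norm (D T))^2) - complex_of_real ((norm (D x))^2))
      \<le> 2 * (LINT t:{x..T}|lborel. norm (D t) * norm (W t))"
    using by_parts(2) unfolding cnj_mult_self by simp
  then show ?thesis
    unfolding of_real_diff[symmetric] norm_of_real by linarith
qed

lemma H2_halfline_derivative_sq_le:
  fixes P D W :: "real \<Rightarrow> complex"
  assumes H: "H2 {0..} P D W" and x: "0 \<le> x"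
  shows "(norm (D x))^2 \<le> 2 * (LINT t:{0..}|lborel. norm (D t) * norm (W t))"
proof -
  have mD: "set_borel_measurable lborel {0..} D" and iD: "set_integrable lborel {0..} (\<lambda>x. (norm (D x))^2)"
    and mW: "set_borel_measurable lborel {0..} W" and iW: "set_integrable lborel {0..} (\<lambda>x. (norm (W x))^2)"
    using H unfolding H2_def sq_int_def by auto
  define J where "J = (LINT t:{0..}|lborel. norm (D t) * norm (W t))"
  have iDW: "set_integrable lborel {0..} (\<lambda>t. norm (D t) * norm (W t))"
    using set_integral_norm_mult_AM_GM(1)[OF mD mW iD iW, of 1] by simp
  obtain T where T: "\<And>n. real n \<le> T n" and DT: "(\<lambda>n. D (T n)) \<longlonglongrightarrow> 0"
    using square_integrable_vanishing_sequence[OF iD] by blast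
  have partial: "(norm (D x))^2 \<le> (norm (D (T n)))^2 + 2 * J" if xT: "x \<le> T n" for n
  proof -
    have "(LINT t:{x..T n}|lborel. norm (D t) * norm (W t)) \<le> J"
      unfolding J_def by (rule set_integral_mono_set_nonneg[OF iDW]) (use x in auto)
    then show ?thesis
      using H2_halfline_derivative_sq_le_Icc[OF H x xT] by linarith
  qed
  obtain N :: nat where "x \<le> real N" using real_arch_simple by blast
  then have "eventually (\<lambda>n. x \<le> T n) sequentially"
    using T by (intro eventually_sequentiallyI[of N]) (meson of_nat_le_iff order_trans)
  then have "eventually (\<lambda>n. (norm (D x))^2 \<le> (norm (D (T n)))^2 + 2 * J) sequentially"
    by eventually_elim (rule partial)
  moreover have "(\<lambda>n. (norm (D (T n)))^2 + 2 * J) \<longlonglongrightarrow> 0^2 + 2 * J"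
    by (intro tendsto_intros tendsto_norm_zero DT)
  ultimately show ?thesis
    unfolding J_def[symmetric] by (intro tendsto_lowerbound) auto
qed

text \<open>
  The energy and pointwise estimates bound I = ||Phi'||^2 and d = |Phi'(0)| in terms of each other;
  Young's inequality 2 K^2 d <= d^2 + K^4 decouples them.
\<close>
lemma energy_le_of_coupled_bounds:
  fixes K a b I d :: real
  assumes K: "1 \<le> K" and b: "0 \<le> b" and I: "0 \<le> I"
    and energy: "I \<le> d + K^2 * a" and pointwise: "d^2 \<le> K * I + K^3 * b"
  shows "I \<le> K^2 * (1 + 2 * a + b)"
proof -
  have young: "2 * K^2 * d \<le> d^2 + K^4"
    using sum_squares_ge_zero[of "d - K^2" 0]
    by (simp add: power2_eq_square power_numeral_reduce algebra_simps)
  have "K^3 * b \<le> K^4 * b"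
    using K b by (intro mult_right_mono power_increasing) auto
  moreover have "K * I \<le> K^2 * I"
    using K I by (intro mult_right_mono) (auto simp: power2_eq_square)
  moreover have "2 * K^2 * I \<le> 2 * K^2 * d + 2 * K^4 * a"
    using mult_left_mono[OF energy, of "2 * K^2"] by (simp add: algebra_simps power_numeral_reduce)
  ultimately have "K^2 * I \<le> K^2 * (K^2 * (1 + 2 * a + b))"
    using young pointwise by (simp add: algebra_simps power_numeral_reduce)
  then show ?thesis
    using K mult_le_cancel_left_pos[of "K^2"] by (metis zero_less_power less_le_trans zero_less_one)
qed

lemma square_integral_le_of_AE_norm_le:
  fixes P W :: "real \<Rightarrow> complex"
  assumes iW: "set_integrable lborel {0..} (\<lambda>x. (norm (W x))^2)"
    and iP: "set_integrable lborel {0..} (\<lambda>x. (norm (P x))^2)"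
    and W: "AE x in lborel. 0 < x \<longrightarrow> norm (W x) \<le> c * norm (P x)"
  shows "(LINT x:{0..}|lborel. (norm (W x))^2) \<le> c^2 * (LINT x:{0..}|lborel. (norm (P x))^2)"
proof -
  have "(LINT x:{0..}|lborel. (norm (W x))^2) \<le> (LINT x:{0..}|lborel. c^2 * (norm (P x))^2)"
  proof (rule set_integral_mono_AE[OF iW])
    show "set_integrable lborel {0..} (\<lambda>x. c^2 * (norm (P x))^2)"
      using iP by simp
    show "AE x\<in>{0..} in lborel. (norm (W x))^2 \<le> c^2 * (norm (P x))^2"
      using W AE_lborel_singleton[of 0]
      by eventually_elim (auto simp flip: power_mult_distrib intro!: power_mono)
  qed
  then show ?thesis by simp
qed

lemma H2_halfline_derivative_estimates:
  fixes P D W :: "real \<Rightarrow> complex" and K L E Mb :: real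
  assumes H: "H2 {0..} P D W" and P0: "P 0 = 1"
    and P_bounded: "\<And>x. 0 \<le> x \<Longrightarrow> norm (P x) \<le> Mb"
    and P_norm: "(LINT x:{0..}|lborel. (norm (P x))^2) \<le> E"
    and K: "1 \<le> K" and W: "AE x in lborel. 0 < x \<longrightarrow> norm (W x) \<le> K^2 * L * norm (P x)"
  shows "(LINT x:{0..}|lborel. (norm (D x))^2) \<le> K^2 * (1 + E + 2 * L^2 * E)"
    and "\<forall>x\<ge>0. (norm (D x))^2 \<le> K^3 * (1 + E + 3 * L^2 * E)"
proof -
  have mP: "set_borel_measurable lborel {0..} P" and iP: "set_integrable lborel {0..} (\<lambda>x. (norm (P x))^2)"
    and mD: "set_borel_measurable lborel {0..} D" and iD: "set_integrable lborel {0..} (\<lambda>x. (norm (D x))^2)"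
    and mW: "set_borel_measurable lborel {0..} W" and iW: "set_integrable lborel {0..} (\<lambda>x. (norm (W x))^2)"
    using H unfolding H2_def sq_int_def by auto
  define IP where "IP = (LINT x:{0..}|lborel. (norm (P x))^2)"
  define ID where "ID = (LINT x:{0..}|lborel. (norm (D x))^2)"
  define IW where "IW = (LINT x:{0..}|lborel. (norm (W x))^2)"
  have K0: "0 < K" using K by simp
  have E: "IP \<le> E" "0 \<le> E"
    using P_norm set_integral_norm_sq_nonneg[of "{0..}" P] by (simp_all add: IP_def)
  have "IW \<le> (K^2 * L)^2 * IP"
    unfolding IW_def IP_def by (rule square_integral_le_of_AE_norm_le[OF iW iP W])
  also have "\<dots> \<le> K^4 * (L^2 * E)"
    using mult_left_mono[OF E(1), of "(K^2 * L)^2"]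
    by (simp add: power_mult_distrib power_mult[symmetric] mult_ac)
  finally have IW_le: "IW \<le> K^4 * (L^2 * E)" .
  have "2 * (LINT x:{0..}|lborel. norm (P x) * norm (W x)) \<le> K^2 * IP + IW / K^2"
    unfolding IP_def IW_def by (rule set_integral_norm_mult_AM_GM(2)[OF mP mW iP iW]) (use K0 in simp)
  also have "\<dots> \<le> K^2 * E + K^2 * (L^2 * E)"
    using IW_le E K0 by (intro add_mono mult_left_mono) (auto simp: divide_le_eq power_numeral_reduce mult_ac)
  finally have "(LINT x:{0..}|lborel. norm (P x) * norm (W x)) \<le> K^2 * ((E + L^2 * E) / 2)"
    by (simp add: field_simps)
  then have energy: "ID \<le> norm (D 0) + K^2 * ((E + L^2 * E) / 2)"
    using H2_halfline_energy_le[OF H P_bounded] P0 by (simp add: ID_def)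
  have pointwise: "(norm (D x))^2 \<le> K * ID + K^3 * (L^2 * E)" if "0 \<le> x" for x
  proof -
    have "(norm (D x))^2 \<le> K * ID + IW / K"
      using H2_halfline_derivative_sq_le[OF H that]
        set_integral_norm_mult_AM_GM(2)[OF mD mW iD iW K0]
      unfolding ID_def IW_def by linarith
    also have "IW / K \<le> K^3 * (L^2 * E)"
      using IW_le K0 by (simp add: divide_le_eq power_numeral_reduce mult_ac)
    finally show ?thesis by simp
  qed
  have "0 \<le> L^2 * E" and "0 \<le> ID"
    using E(2) set_integral_norm_sq_nonneg[of "{0..}" D] by (simp_all add: ID_def)
  then have "ID \<le> K^2 * (1 + 2 * ((E + L^2 * E) / 2) + L^2 * E)"
    by (intro energy_le_of_coupled_bounds[OF K _ _ energy pointwise[OF order.refl]])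
  also have "1 + 2 * ((E + L^2 * E) / 2) + L^2 * E = 1 + E + 2 * L^2 * E"
    by simp
  finally have ID_le: "ID \<le> K^2 * (1 + E + 2 * L^2 * E)" .
  then show "(LINT x:{0..}|lborel. (norm (D x))^2) \<le> K^2 * (1 + E + 2 * L^2 * E)"
    unfolding ID_def .
  show "\<forall>x\<ge>0. (norm (D x))^2 \<le> K^3 * (1 + E + 3 * L^2 * E)"
  proof (intro allI impI)
    fix x :: real assume "0 \<le> x"
    have "K * ID \<le> K^3 * (1 + E + 2 * L^2 * E)"
      using mult_left_mono[OF ID_le, of K] K0 by (simp add: power_numeral_reduce mult_ac)
    then show "(norm (D x))^2 \<le> K^3 * (1 + E + 3 * L^2 * E)"
      using pointwise[OF \<open>0 \<le> x\<close>] by (simp add: algebra_simps)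
  qed
qed

lemma set_integrable_exp_decay_sq:
  fixes \<rho> M :: real
  assumes "0 < \<rho>"
  shows "set_integrable lborel {0..} (\<lambda>x. (M * exp (- \<rho> * x))^2)"
proof -
  have eq: "(\<lambda>x::real. (M * exp (- \<rho> * x))^2) = (\<lambda>x. of_real (M^2) * exp (- (2 * \<rho>) * x))"
    by (auto simp: fun_eq_iff power_mult_distrib power2_eq_square exp_add[symmetric])
  have "(\<lambda>x::real. of_real (M^2) * exp (- (2 * \<rho>) * x)) integrable_on {0..}"
    by (rule integrable_on_cmult_left[OF integrable_on_exp_minus_to_infinity]) (use assms in simp)
  then have "set_integrable lebesgue {0..} (\<lambda>x::real. of_real (M^2) * exp (- (2 * \<rho>) * x))"
    by (rule nonnegative_absolutely_integrable_1) simp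
  moreover have "(\<lambda>x::real. indicator {0..} x *\<^sub>R (of_real (M^2) * exp (- (2 * \<rho>) * x))) \<in> borel_measurable lborel"
    by measurable
  ultimately show ?thesis
    unfolding eq set_integrable_def using integrable_completion by blast
qed

lemma sqrt_power3_eq_powr:
  fixes x :: real
  assumes "0 \<le> x"
  shows "sqrt (x^3) = x powr (3/2)"
proof (cases "x = 0")
  case False
  with assms have "x powr 3 = x^3"
    by (simp add: powr_numeral)
  moreover have "x powr (3/2) = (x powr 3) powr (1/2)"
    by (simp add: powr_powr)
  ultimately show ?thesis
    using assms by (simp add: powr_half_sqrt)
qed simp

lemma H2_halfline_norm_bounds:
  fixes P D W :: "real \<Rightarrow> complex" and K L E Mb :: real
  assumes H: "H2 {0..} P D W" and P0: "P 0 = 1"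
    and P_bounded: "\<And>x. 0 \<le> x \<Longrightarrow> norm (P x) \<le> Mb"
    and P_norm: "(LINT x:{0..}|lborel. (norm (P x))^2) \<le> E"
    and K: "1 \<le> K" and W: "AE x in lborel. 0 < x \<longrightarrow> norm (W x) \<le> K^2 * L * norm (P x)"
  defines "C \<equiv> sqrt E + sqrt (1 + E + 3 * L^2 * E)"
  shows "l2norm {0..} P \<le> C" and "l2norm {0..} D \<le> C * K"
    and "\<forall>x\<ge>0. norm (D x) \<le> C * K powr (3/2)"
proof -
  note bounds = H2_halfline_derivative_estimates[OF H P0 P_bounded P_norm K W]
  define Q where "Q = 1 + E + 3 * L^2 * E"
  have "0 \<le> E" using P_norm set_integral_norm_sq_nonneg[of "{0..}" P] by linarith
  then have "0 \<le> sqrt E" "0 \<le> sqrt Q" by (simp_all add: Q_def)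
  have C: "C = sqrt E + sqrt Q" by (simp add: C_def Q_def)
  show "l2norm {0..} P \<le> C"
    using P_norm \<open>0 \<le> sqrt Q\<close> unfolding C l2norm_def by (smt (verit) real_sqrt_le_mono)
  have "K^2 * (1 + E + 2 * L^2 * E) \<le> K^2 * Q"
    unfolding Q_def using \<open>0 \<le> E\<close> by (intro mult_left_mono) auto
  then have "l2norm {0..} D \<le> sqrt (K^2 * Q)"
    unfolding l2norm_def using bounds(1) by (intro real_sqrt_le_mono) linarith
  also have "\<dots> \<le> C * K"
    using K \<open>0 \<le> sqrt E\<close> unfolding C by (simp add: real_sqrt_mult distrib_right)
  finally show "l2norm {0..} D \<le> C * K" .
  show "\<forall>x\<ge>0. norm (D x) \<le> C * K powr (3/2)"
  proof (intro allI impI)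
    fix x :: real assume "0 \<le> x"
    then have "norm (D x) \<le> sqrt (K^3 * Q)"
      using bounds(2) by (intro real_le_rsqrt) (simp add: Q_def)
    also have "\<dots> \<le> C * K powr (3/2)"
      using K \<open>0 \<le> sqrt E\<close> unfolding C by (simp add: real_sqrt_mult sqrt_power3_eq_powr distrib_right)
    finally show "norm (D x) \<le> C * K powr (3/2)" .
  qed
qed

lemma norm_le_of_exp_decay:
  fixes f :: "real \<Rightarrow> complex"
  assumes "0 \<le> \<rho>" and decay: "\<And>x. 0 \<le> x \<Longrightarrow> norm (f x) \<le> M * exp (- \<rho> * x)" and "0 \<le> x"
  shows "norm (f x) \<le> M"
proof -
  have "0 \<le> M" using order_trans[OF norm_ge_zero decay[of 0]] by simp
  moreover have "exp (- \<rho> * x) \<le> 1" using assms by simp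
  ultimately show ?thesis
    using decay[OF \<open>0 \<le> x\<close>] by (smt (verit) mult_left_le)
qed

lemma square_integral_le_of_exp_decay:
  fixes f :: "real \<Rightarrow> complex"
  assumes "0 < \<rho>" and decay: "\<And>x. 0 \<le> x \<Longrightarrow> norm (f x) \<le> M * exp (- \<rho> * x)"
    and f: "set_integrable lborel {0..} (\<lambda>x. (norm (f x))^2)"
  shows "(LINT x:{0..}|lborel. (norm (f x))^2) \<le> (LINT x:{0..}|lborel. (M * exp (- \<rho> * x))^2)"
proof (rule set_integral_mono[OF f set_integrable_exp_decay_sq[OF \<open>0 < \<rho>\<close>]])
  fix x :: real assume "x \<in> {0..}"
  then show "(norm (f x))^2 \<le> (M * exp (- \<rho> * x))^2"
    using decay[of x] by (intro power_mono) auto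
qed

lemma second_derivative_le_of_potential_bound:
  fixes P W :: "real \<Rightarrow> complex" and V :: "real \<Rightarrow> real"
  assumes eq: "AE x in lborel. x > 0 \<longrightarrow> - W x - complex_of_real (c * V x) * P x = 0"
    and V: "AE x in lborel. \<bar>V x\<bar> \<le> B" and c: "0 \<le> c"
  shows "AE x in lborel. 0 < x \<longrightarrow> norm (W x) \<le> c * B * norm (P x)"
  using eq V
proof eventually_elim
  case (elim x)
  show ?case
  proof
    assume "0 < x"
    then have "- W x = complex_of_real (c * V x) * P x"
      using elim(1) by (simp add: diff_eq_eq)
    then have "norm (W x) = c * \<bar>V x\<bar> * norm (P x)"
      using c by (metis norm_minus_cancel norm_mult norm_of_real abs_mult abs_of_nonneg)
    also have "\<dots> \<le> c * B * norm (P x)"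
      using elim(2) c by (intro mult_right_mono mult_left_mono) auto
    finally show "norm (W x) \<le> c * B * norm (P x)" .
  qed
qed

theorem lemma2p3:
  fixes g :: "real \<Rightarrow> real" and \<omega> \<gamma> :: real
    and \<Phi> d\<Phi> dd\<Phi> :: "nat \<Rightarrow> real \<Rightarrow> complex"
  assumes omega_pos: "\<omega> > 0"
    and C0_meas: "g \<in> borel_measurable lborel"
    and C0_bdd: "\<exists>B. AE x in lborel. \<bar>g x\<bar> \<le> B"
    and C0_even: "AE x in lborel. g (- x) = g x"
    and C0_nonzero: "\<not> (AE x in lborel. g x = 0)"
    and C0_gamma: "\<gamma> \<noteq> 0"
    and C1: "\<forall>k. odd k \<longrightarrow>
              \<not> zero_in_ess (graph_L g \<omega> k) \<and> zero_in_resolvent (graph_LD g \<omega> k)"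
    and Phi_H2: "\<forall>k. odd k \<longrightarrow> H2 {0..} (\<Phi> k) (d\<Phi> k) (dd\<Phi> k)"
    and Phi_eq: "\<forall>k. odd k \<longrightarrow> (AE x in lborel. x > 0 \<longrightarrow>
              - dd\<Phi> k x - complex_of_real ((real k)^2 * \<omega>^2 * g x) * \<Phi> k x = 0)"
    and Phi_0: "\<forall>k. odd k \<longrightarrow> \<Phi> k 0 = 1"
    and C2: "\<exists>\<rho> M. \<rho> > 0 \<and> M > 0 \<and>
              (\<forall>k. odd k \<longrightarrow> (\<forall>x\<ge>0. norm (\<Phi> k x) \<le> M * exp (- \<rho> * x)))"
  shows "\<exists>C N. \<forall>k. odd k \<and> k \<ge> N \<longrightarrow>
           l2norm {0..} (\<Phi> k) \<le> C \<and>
           l2norm {0..} (d\<Phi> k) \<le> C * real k \<and>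
           (\<forall>x\<ge>0. norm (d\<Phi> k x) \<le> C * real k powr (3/2)) \<and>
           norm (d\<Phi> k 0) \<le> C * real k powr (3/2)"
proof -
  obtain \<rho> M where \<rho>: "0 < \<rho>"
    and decay: "\<And>k x. odd k \<Longrightarrow> 0 \<le> x \<Longrightarrow> norm (\<Phi> k x) \<le> M * exp (- \<rho> * x)"
    using C2 by blast
  obtain B where g_bounded: "AE x in lborel. \<bar>g x\<bar> \<le> B" using C0_bdd by blast
  define L where "L = \<omega>^2 * B"
  define E where "E = (LINT x:{0..}|lborel. (M * exp (- \<rho> * x))^2)"
  define C where "C = sqrt E + sqrt (1 + E + 3 * L^2 * E)"
  have "l2norm {0..} (\<Phi> k) \<le> C \<and> l2norm {0..} (d\<Phi> k) \<le> C * real k \<and>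
      (\<forall>x\<ge>0. norm (d\<Phi> k x) \<le> C * real k powr (3/2))" if k: "odd k" for k
  proof -
    have H: "H2 {0..} (\<Phi> k) (d\<Phi> k) (dd\<Phi> k)" using Phi_H2 k by blast
    then have "(LINT x:{0..}|lborel. (norm (\<Phi> k x))^2) \<le> E"
      unfolding E_def H2_def sq_int_def by (intro square_integral_le_of_exp_decay[OF \<rho> decay[OF k]]) auto
    moreover have "AE x in lborel. 0 < x \<longrightarrow> norm (dd\<Phi> k x) \<le> (real k)^2 * L * norm (\<Phi> k x)"
      using second_derivative_le_of_potential_bound[OF Phi_eq[rule_format, OF k] g_bounded]
      by (simp add: L_def mult.assoc)
    moreover have "1 \<le> real k" using k by (cases k) auto
    moreover note norm_le_of_exp_decay[OF less_imp_le[OF \<rho>] decay[OF k]]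
    ultimately show ?thesis
      using H2_halfline_norm_bounds[OF H Phi_0[rule_format, OF k], of M E "real k" L] by (simp add: C_def)
  qed
  then show ?thesis
    by (intro exI[of _ C] exI[of _ 1]) auto
qed

end
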